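(* Let $f: (\mathbb{R}^{+})^n \to (\mathbb{R}^{+})^n$ be homogeneous and monotone. All super-eigenspaces $S^\lambda(f) = \{x \in (\mathbb{R}^{+})^n : f(x) \le \lambda x\}$, $\lambda \in \mathbb{R}^{+}$, are bounded in the Hilbert projective metric if and only if $f$ is indecomposable.
   Context: Homogeneous: $f(\lambda x) = \lambda f(x)$ for all $\lambda > 0$; monotone: $x \le y$ componentwise implies $f(x) \le f(y)$. For $u>0$ and $J \subseteq \{1,\dots,n\}$, $u_J$ has entries $u$ on $J$ and $1$ off $J$. $f$ is decomposable if there is a partition $\{1,\dots,n\} = I \cup J$ with $I \cap J = \emptyset$, $I, J$ nonempty, such that $\lim_{u\to\infty} f_i(u_J) < \infty$ for all $i \in I$; indecomposable otherwise. Hilbert projective metric: $d_H(y,z) = \max_i \log(y_i/z_i) - \min_i \log(y_i/z_i)$; a set $A$ is bounded if $\sup_{y,z\in A} d_H(y,z)<\infty$. *)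

theory Defs
  imports "HOL-Analysis.Analysis"
begin

text \<open>Vectors in (R^+)^n are modelled as elements of real^'n with all entries positive.\<close>

definition pos_vec :: "real^'n \<Rightarrow> bool" where
  "pos_vec x \<longleftrightarrow> (\<forall>i. x $ i > 0)"

definition homogeneous_map :: "(real^'n \<Rightarrow> real^'n) \<Rightarrow> bool" where
  "homogeneous_map f \<longleftrightarrow> (\<forall>x c. pos_vec x \<and> c > 0 \<longrightarrow> f (c *\<^sub>R x) = c *\<^sub>R f x)"

definition monotone_pos_map :: "(real^'n \<Rightarrow> real^'n) \<Rightarrow> bool" where
  "monotone_pos_map f \<longleftrightarrow> (\<forall>x y. pos_vec x \<and> pos_vec y \<and> (\<forall>i. x $ i \<le> y $ i)
      \<longrightarrow> (\<forall>i. f x $ i \<le> f y $ i))"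

definition uvec :: "real \<Rightarrow> 'n set \<Rightarrow> real^'n" where
  "uvec u J = (\<chi> i. if i \<in> J then u else 1)"

definition decomposable :: "(real^'n \<Rightarrow> real^'n) \<Rightarrow> bool" where
  "decomposable f \<longleftrightarrow> (\<exists>I J. I \<union> J = UNIV \<and> I \<inter> J = {} \<and> I \<noteq> {} \<and> J \<noteq> {} \<and>
      (\<forall>i\<in>I. \<exists>L::real. ((\<lambda>u. f (uvec u J) $ i) \<longlongrightarrow> L) at_top))"

definition indecomposable :: "(real^'n \<Rightarrow> real^'n) \<Rightarrow> bool" where
  "indecomposable f \<longleftrightarrow> \<not> decomposable f"

definition hilbert_dist :: "real^'n \<Rightarrow> real^'n \<Rightarrow> real" where
  "hilbert_dist y z = (MAX i. ln (y $ i / z $ i)) - (MIN i. ln (y $ i / z $ i))"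

definition hilbert_bounded :: "(real^'n) set \<Rightarrow> bool" where
  "hilbert_bounded A \<longleftrightarrow> (\<exists>B. \<forall>y\<in>A. \<forall>z\<in>A. hilbert_dist y z \<le> B)"

definition super_eigenspace :: "(real^'n \<Rightarrow> real^'n) \<Rightarrow> real \<Rightarrow> (real^'n) set" where
  "super_eigenspace f c = {x. pos_vec x \<and> (\<forall>i. f x $ i \<le> c * x $ i)}"

end

theory Submission
  imports Defs
begin

text \<open>
  If f is decomposable along \<open>I \<union> J\<close>, the coordinates \<open>f(u\<^sub>J)\<^sub>i\<close>, \<open>i \<in> I\<close>, stay bounded
  while those in J grow at most linearly in u, so all \<open>u\<^sub>J\<close> with \<open>u \<ge> 1\<close> lie in a single
  super-eigenspace, at Hilbert distance \<open>ln u\<close> from the vector of ones.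

  Conversely, let f be indecomposable and x a super-eigenvector for c with least entry m.
  For every proper nonempty J some coordinate \<open>f(u\<^sub>J)\<^sub>i\<close> with \<open>i \<notin> J\<close> is unbounded in u, so
  there are thresholds \<open>1 = T\<^sub>0 \<le> T\<^sub>1 \<le> \<dots>\<close>, depending only on f and c, such that whenever
  the coordinates of x below \<open>T\<^sub>k m\<close> form a proper subset, some further coordinate is below
  \<open>T\<^sub>k\<^sub>+\<^sub>1 m\<close>: otherwise \<open>m u\<^sub>J \<le> x\<close> for \<open>u = T\<^sub>k\<^sub>+\<^sub>1\<close>, and monotonicity and homogeneity give
  \<open>m f(u\<^sub>J) \<le> f(x) \<le> c x\<close>, which fails at a coordinate \<open>i \<notin> J\<close> chosen by the threshold.
  After n steps every entry of x is within the factor \<open>T\<^sub>n\<close> of the least one, which bounds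
  the Hilbert diameter of the super-eigenspace by \<open>2 ln T\<^sub>n\<close>.
\<close>

lemma uvec_nth [simp]: "uvec u J $ i = (if i \<in> J then u else 1)"
  by (simp add: uvec_def)

lemma pos_vec_uvec: "u > 0 \<Longrightarrow> pos_vec (uvec u J)"
  by (simp add: pos_vec_def)

lemma monotone_pos_mapD:
  "monotone_pos_map f \<Longrightarrow> pos_vec x \<Longrightarrow> pos_vec y \<Longrightarrow> (\<And>k. x $ k \<le> y $ k) \<Longrightarrow> f x $ i \<le> f y $ i"
  unfolding monotone_pos_map_def by blast

lemma pos_vec_Min: "pos_vec x \<Longrightarrow> 0 < (MIN k. x $ k)"
  by (simp add: pos_vec_def)

lemma Min_nth_attained: "\<exists>i. x $ i = (MIN k. x $ k)"
proof -
  have "(MIN k. x $ k) \<in> range (($) x)" by (rule Min_in) auto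
  then show ?thesis by (metis rangeE)
qed

lemma homogeneous_map_scaleR_nth:
  "homogeneous_map f \<Longrightarrow> pos_vec x \<Longrightarrow> c > 0 \<Longrightarrow> f (c *\<^sub>R x) $ i = c * f x $ i"
  unfolding homogeneous_map_def by simp

lemma homogeneous_monotone_scaleR_le:
  assumes hom: "homogeneous_map f" and mon: "monotone_pos_map f"
    and "pos_vec x" "pos_vec y" "0 < m" and le: "\<And>k. m * y $ k \<le> x $ k"
  shows "m * f y $ i \<le> f x $ i"
proof -
  have "f (m *\<^sub>R y) $ i \<le> f x $ i"
    by (rule monotone_pos_mapD[OF mon]) (use assms in \<open>auto simp: pos_vec_def\<close>)
  then show ?thesis using homogeneous_map_scaleR_nth[OF hom \<open>pos_vec y\<close> \<open>0 < m\<close>] by simp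
qed

lemma monotone_pos_map_uvec:
  assumes "monotone_pos_map f" "0 < u" "u \<le> v"
  shows "f (uvec u J) $ i \<le> f (uvec v J) $ i"
  using assms by (auto intro!: monotone_pos_mapD[OF assms(1)] simp: pos_vec_uvec)

lemma mono_on_tendsto_at_top_iff_bdd_above:
  fixes g :: "real \<Rightarrow> real"
  assumes mono: "mono_on {a..} g"
  shows "(\<exists>L. (g \<longlongrightarrow> L) at_top) \<longleftrightarrow> bdd_above (g ` {a..})"
proof
  assume "\<exists>L. (g \<longlongrightarrow> L) at_top"
  then obtain L where lim: "(g \<longlongrightarrow> L) at_top" by blast
  have "g u \<le> L" if "a \<le> u" for u
  proof (rule tendsto_lowerbound[OF lim])
    show "\<forall>\<^sub>F v in at_top. g u \<le> g v"
      using eventually_ge_at_top[of u]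
      by eventually_elim (use that in \<open>auto intro: mono_onD[OF mono]\<close>)
  qed simp
  then show "bdd_above (g ` {a..})" by (intro bdd_aboveI2) auto
next
  assume bdd: "bdd_above (g ` {a..})"
  define L where "L = (SUP u\<in>{a..}. g u)"
  have "(g \<longlongrightarrow> L) at_top"
  proof (rule order_tendstoI)
    fix b assume "b < L"
    then obtain u0 where u0: "a \<le> u0" "b < g u0"
      unfolding L_def by (subst (asm) less_cSUP_iff[OF _ bdd]) auto
    show "\<forall>\<^sub>F u in at_top. b < g u"
      using eventually_ge_at_top[of u0]
      by eventually_elim (meson u0 mono mono_onD atLeast_iff order.trans less_le_trans)
  next
    fix b assume "L < b"
    show "\<forall>\<^sub>F u in at_top. g u < b"
      using eventually_ge_at_top[of a]
      by eventually_elim (use bdd \<open>L < b\<close> in \<open>auto simp: L_def intro: le_less_trans[OF cSUP_upper]\<close>)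
  qed
  then show "\<exists>L. (g \<longlongrightarrow> L) at_top" by blast
qed

lemma decomposable_iff_bdd_above:
  assumes "monotone_pos_map f"
  shows "decomposable f \<longleftrightarrow>
    (\<exists>J. J \<noteq> {} \<and> J \<noteq> UNIV \<and> (\<forall>i\<in>-J. bdd_above ((\<lambda>u. f (uvec u J) $ i) ` {1..})))"
proof -
  have "mono_on {1..} (\<lambda>u. f (uvec u J) $ i)" for J i
    using assms by (intro mono_onI monotone_pos_map_uvec) auto
  then have lim_iff: "(\<exists>L. ((\<lambda>u. f (uvec u J) $ i) \<longlongrightarrow> L) at_top)
      \<longleftrightarrow> bdd_above ((\<lambda>u. f (uvec u J) $ i) ` {1..})" for J i
    by (rule mono_on_tendsto_at_top_iff_bdd_above)
  show ?thesis
  proof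
    assume "decomposable f"
    then obtain I J where IJ: "I \<union> J = UNIV" "I \<inter> J = {}" "I \<noteq> {}" "J \<noteq> {}"
      and lim: "\<forall>i\<in>I. \<exists>L. ((\<lambda>u. f (uvec u J) $ i) \<longlongrightarrow> L) at_top"
      unfolding decomposable_def by blast
    from IJ have "I = -J" by blast
    with IJ lim show "\<exists>J. J \<noteq> {} \<and> J \<noteq> UNIV \<and> (\<forall>i\<in>-J. bdd_above ((\<lambda>u. f (uvec u J) $ i) ` {1..}))"
      unfolding lim_iff by (intro exI[of _ J]) auto
  next
    assume "\<exists>J. J \<noteq> {} \<and> J \<noteq> UNIV \<and> (\<forall>i\<in>-J. bdd_above ((\<lambda>u. f (uvec u J) $ i) ` {1..}))"
    then obtain J where "J \<noteq> {}" "J \<noteq> UNIV"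
      and "\<forall>i\<in>-J. bdd_above ((\<lambda>u. f (uvec u J) $ i) ` {1..})" by blast
    then show "decomposable f"
      unfolding decomposable_def lim_iff by (intro exI[of _ "-J"] exI[of _ J]) auto
  qed
qed

lemma hilbert_dist_ge: "ln (y $ j / z $ j) - ln (y $ i / z $ i) \<le> hilbert_dist y z"
proof -
  have "ln (y $ j / z $ j) \<le> (MAX k. ln (y $ k / z $ k))" by (rule Max_ge) auto
  moreover have "(MIN k. ln (y $ k / z $ k)) \<le> ln (y $ i / z $ i)" by (rule Min_le) auto
  ultimately show ?thesis unfolding hilbert_dist_def by linarith
qed

lemma hilbert_dist_le:
  assumes "\<And>i. a \<le> ln (y $ i / z $ i)" "\<And>i. ln (y $ i / z $ i) \<le> b"
  shows "hilbert_dist y z \<le> b - a"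
proof -
  have "(MAX i. ln (y $ i / z $ i)) \<le> b" using assms(2) by (subst Max_le_iff) auto
  moreover have "a \<le> (MIN i. ln (y $ i / z $ i))" using assms(1) by (subst Min_ge_iff) auto
  ultimately show ?thesis unfolding hilbert_dist_def by linarith
qed

lemma not_hilbert_bounded_uvec:
  assumes "J \<noteq> {}" "J \<noteq> UNIV" and uvec_in: "\<And>u. 1 \<le> u \<Longrightarrow> uvec u J \<in> A"
  shows "\<not> hilbert_bounded A"
proof
  assume "hilbert_bounded A"
  then obtain B where B: "\<And>y z. y \<in> A \<Longrightarrow> z \<in> A \<Longrightarrow> hilbert_dist y z \<le> B"
    unfolding hilbert_bounded_def by blast
  obtain i j where "i \<notin> J" "j \<in> J" using assms(1,2) by blast
  define u where "u = exp (\<bar>B\<bar> + 1)"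
  have "\<bar>B\<bar> + 1 \<le> hilbert_dist (uvec u J) (uvec 1 J)"
    using hilbert_dist_ge[where y = "uvec u J" and z = "uvec 1 J" and j = j and i = i]
      \<open>i \<notin> J\<close> \<open>j \<in> J\<close>
    by (simp add: u_def)
  moreover have "hilbert_dist (uvec u J) (uvec 1 J) \<le> B"
    by (intro B uvec_in) (auto simp: u_def)
  ultimately show False by linarith
qed

lemma hilbert_dist_le_spread:
  assumes "pos_vec y" "pos_vec z"
    and y_spread: "\<And>i. y $ i \<le> T * (MIN k. y $ k)"
    and z_spread: "\<And>i. z $ i \<le> T * (MIN k. z $ k)"
  shows "hilbert_dist y z \<le> 2 * ln T"
proof -
  define my mz where "my = (MIN k. y $ k)" and "mz = (MIN k. z $ k)"
  have pos: "0 < y $ i" "0 < z $ i" for i using assms(1,2) unfolding pos_vec_def by auto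
  have "0 < my" "0 < mz" unfolding my_def mz_def using assms(1,2) pos_vec_Min by blast+
  have "0 < T * my" using y_spread[of i] pos(1)[of i] unfolding my_def by linarith
  then have "0 < T" using \<open>0 < my\<close> by (simp add: zero_less_mult_iff)
  have my_le: "my \<le> y $ i" and mz_le: "mz \<le> z $ i" for i unfolding my_def mz_def by auto
  have "ln (my / (T * mz)) \<le> ln (y $ i / z $ i)" "ln (y $ i / z $ i) \<le> ln (T * my / mz)" for i
  proof -
    have "my / (T * mz) \<le> y $ i / z $ i"
      using frac_le[OF less_imp_le[OF pos(1)] my_le pos(2)] z_spread[of i] by (simp add: mz_def)
    moreover have "y $ i / z $ i \<le> T * my / mz"
    proof (rule frac_le[OF _ _ \<open>0 < mz\<close> mz_le])
      show "0 \<le> T * my" using \<open>0 < T\<close> \<open>0 < my\<close> by simp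
      show "y $ i \<le> T * my" using y_spread unfolding my_def .
    qed
    ultimately show "ln (my / (T * mz)) \<le> ln (y $ i / z $ i)" "ln (y $ i / z $ i) \<le> ln (T * my / mz)"
      using pos \<open>0 < T\<close> \<open>0 < my\<close> \<open>0 < mz\<close> by simp_all
  qed
  then have "hilbert_dist y z \<le> ln (T * my / mz) - ln (my / (T * mz))"
    by (rule hilbert_dist_le)
  also have "\<dots> = 2 * ln T"
    using \<open>0 < my\<close> \<open>0 < mz\<close> \<open>0 < T\<close> by (simp add: ln_div ln_mult)
  finally show ?thesis .
qed

lemma decomposable_super_eigenspace_unbounded:
  assumes hom: "homogeneous_map f" and mon: "monotone_pos_map f" and "decomposable f"
  shows "\<exists>c>0. \<not> hilbert_bounded (super_eigenspace f c)"
proof -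
  from \<open>decomposable f\<close> obtain J where J: "J \<noteq> {}" "J \<noteq> UNIV"
    and "\<forall>i\<in>-J. bdd_above ((\<lambda>u. f (uvec u J) $ i) ` {1..})"
    unfolding decomposable_iff_bdd_above[OF mon] by blast
  then have "bdd_above (\<Union>i\<in>-J. (\<lambda>u. f (uvec u J) $ i) ` {1..})" by simp
  then obtain K where K: "\<And>i u. i \<notin> J \<Longrightarrow> 1 \<le> u \<Longrightarrow> f (uvec u J) $ i \<le> K"
    unfolding bdd_above_def by auto
  define c where "c = max 1 (max K (MAX i. f (uvec 1 J) $ i))"
  have "uvec u J \<in> super_eigenspace f c" if "1 \<le> u" for u
    unfolding super_eigenspace_def
  proof (intro CollectI conjI allI)
    show "pos_vec (uvec u J)" using that by (simp add: pos_vec_uvec)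
    fix i
    show "f (uvec u J) $ i \<le> c * uvec u J $ i"
    proof (cases "i \<in> J")
      case False
      have "f (uvec u J) $ i \<le> c" using K[OF False that] unfolding c_def by linarith
      then show ?thesis using False by simp
    next
      case True
      have "f (uvec u J) $ i \<le> f (u *\<^sub>R uvec 1 J) $ i"
        using that by (rule_tac monotone_pos_mapD[OF mon]) (auto simp: pos_vec_def)
      also have "\<dots> = u * f (uvec 1 J) $ i"
        using that by (rule_tac homogeneous_map_scaleR_nth[OF hom]) (auto simp: pos_vec_uvec)
      also have "\<dots> \<le> u * c"
      proof (rule mult_left_mono)
        have "f (uvec 1 J) $ i \<le> (MAX i. f (uvec 1 J) $ i)" by (rule Max_ge) auto
        then show "f (uvec 1 J) $ i \<le> c" unfolding c_def by linarith
      qed (use that in simp)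
      finally show ?thesis using True by (simp add: mult.commute)
    qed
  qed
  moreover have "c > 0" by (simp add: c_def)
  ultimately show ?thesis using not_hilbert_bounded_uvec[OF J] by blast
qed

lemma finite_chain_reaches_UNIV:
  fixes S :: "nat \<Rightarrow> 'a::finite set"
  assumes mono: "\<And>k. S k \<subseteq> S (Suc k)" and grows: "\<And>k. S k \<noteq> UNIV \<Longrightarrow> S k \<noteq> S (Suc k)"
  shows "S CARD('a) = UNIV"
proof -
  have "min k CARD('a) \<le> card (S k)" for k
  proof (induction k)
    case (Suc k)
    show ?case
    proof (cases "S k = UNIV")
      case True
      then have "S (Suc k) = UNIV" using mono[of k] by blast
      then show ?thesis by simp
    next
      case False
      then have "S k \<subset> S (Suc k)" using mono grows by blast
      then have "card (S k) < card (S (Suc k))" by (simp add: psubset_card_mono)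
      then show ?thesis using Suc.IH by linarith
    qed
  qed simp
  from this[of "CARD('a)"] show ?thesis
    by (metis card_seteq finite subset_UNIV min.idem)
qed

lemma indecomposable_eventually_exceeds:
  assumes mon: "monotone_pos_map f" and "indecomposable f" and J: "J \<noteq> {}" "J \<noteq> UNIV"
  shows "\<forall>\<^sub>F u in at_top. \<exists>i\<in>-J. K < f (uvec u J) $ i"
proof -
  have "\<not> (\<forall>i\<in>-J. bdd_above ((\<lambda>u. f (uvec u J) $ i) ` {1..}))"
    using assms(2) J unfolding indecomposable_def decomposable_iff_bdd_above[OF mon] by blast
  then obtain i where "i \<notin> J" and "\<not> bdd_above ((\<lambda>u. f (uvec u J) $ i) ` {1..})"
    by auto
  then obtain u0 where "1 \<le> u0" "K < f (uvec u0 J) $ i"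
    unfolding bdd_above_def by (auto simp: not_le)
  show ?thesis
    using eventually_ge_at_top[of u0]
  proof eventually_elim
    fix u assume "u0 \<le> u"
    then have "f (uvec u0 J) $ i \<le> f (uvec u J) $ i"
      using monotone_pos_map_uvec[OF mon] \<open>1 \<le> u0\<close> by simp
    then show "\<exists>i\<in>-J. K < f (uvec u J) $ i"
      using \<open>i \<notin> J\<close> \<open>K < f (uvec u0 J) $ i\<close> by force
  qed
qed

lemma super_eigenvector_spread:
  fixes x :: "real^'n" and T :: "nat \<Rightarrow> real"
  assumes hom: "homogeneous_map f" and mon: "monotone_pos_map f" and "0 \<le> c"
    and x: "x \<in> super_eigenspace f c"
    and T_ge: "\<And>k. 1 \<le> T k" and T_mono: "\<And>k. T k \<le> T (Suc k)"
    and T_step: "\<And>k J. J \<noteq> {} \<Longrightarrow> J \<noteq> UNIV \<Longrightarrow> \<exists>i\<in>-J. c * T k < f (uvec (T (Suc k)) J) $ i"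
  shows "x $ i \<le> T CARD('n) * (MIN k. x $ k)"
proof -
  define m where "m = (MIN k. x $ k)"
  from x have px: "pos_vec x" and fx: "\<And>i. f x $ i \<le> c * x $ i"
    unfolding super_eigenspace_def by auto
  have "0 < m" using pos_vec_Min[OF px] by (simp add: m_def)
  have m_le: "m \<le> x $ k" for k unfolding m_def by auto
  obtain i0 where "x $ i0 = m" using Min_nth_attained unfolding m_def by blast
  define S where "S k = {i. x $ i \<le> T k * m}" for k
  have "S CARD('n) = UNIV"
  proof (rule finite_chain_reaches_UNIV[of S])
    fix k
    have "T k * m \<le> T (Suc k) * m" using T_mono[of k] \<open>0 < m\<close> by simp
    then show "S k \<subseteq> S (Suc k)" unfolding S_def by auto
  next
    fix k assume "S k \<noteq> UNIV"
    moreover have "i0 \<in> S k" using T_ge[of k] \<open>x $ i0 = m\<close> \<open>0 < m\<close> by (simp add: S_def)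
    ultimately have "- S k \<noteq> {}" "- S k \<noteq> UNIV" by auto
    from T_step[OF this] obtain i where "i \<in> - (- S k)"
      and i: "c * T k < f (uvec (T (Suc k)) (- S k)) $ i" ..
    then have "i \<in> S k" by simp
    have "\<exists>j\<in>- S k. x $ j < T (Suc k) * m"
    proof (rule ccontr)
      assume "\<not> ?thesis"
      then have "T (Suc k) * m \<le> x $ j" if "j \<notin> S k" for j
        using that by (simp add: not_less)
      then have "m * uvec (T (Suc k)) (- S k) $ j \<le> x $ j" for j
        using m_le[of j] by (simp add: mult.commute)
      then have "m * f (uvec (T (Suc k)) (- S k)) $ i \<le> f x $ i"
        using T_ge[of "Suc k"]
        by (intro homogeneous_monotone_scaleR_le[OF hom mon px _ \<open>0 < m\<close>]) (simp_all add: pos_vec_uvec)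
      also have "\<dots> \<le> c * x $ i" by (rule fx)
      also have "\<dots> \<le> c * (T k * m)"
        using \<open>i \<in> S k\<close> \<open>0 \<le> c\<close> unfolding S_def by (simp add: mult_left_mono)
      finally show False using i \<open>0 < m\<close> by (simp add: algebra_simps)
    qed
    then obtain j where "j \<notin> S k" "x $ j < T (Suc k) * m" by auto
    then have "j \<in> S (Suc k) - S k" unfolding S_def by simp
    then show "S k \<noteq> S (Suc k)" by blast
  qed
  then have "i \<in> S CARD('n)" by simp
  then show ?thesis unfolding S_def m_def by simp
qed

lemma indecomposable_super_eigenspace_spread:
  fixes f :: "real^'n \<Rightarrow> real^'n"
  assumes hom: "homogeneous_map f" and mon: "monotone_pos_map f" and ind: "indecomposable f"
    and "0 \<le> c"
  shows "\<exists>T. \<forall>x\<in>super_eigenspace f c. \<forall>i. x $ i \<le> T * (MIN k. x $ k)"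
proof -
  have "\<exists>u\<ge>t. \<forall>J. J \<noteq> {} \<longrightarrow> J \<noteq> UNIV \<longrightarrow> (\<exists>i\<in>-J. c * t < f (uvec u J) $ i)" for t
  proof -
    have "\<forall>\<^sub>F u in at_top. t \<le> u \<and> (\<forall>J\<in>{J. J \<noteq> {} \<and> J \<noteq> UNIV}. \<exists>i\<in>-J. c * t < f (uvec u J) $ i)"
      by (intro eventually_conj eventually_ge_at_top eventually_ball_finite)
         (auto intro: indecomposable_eventually_exceeds[OF mon ind])
    then obtain u where "t \<le> u \<and> (\<forall>J\<in>{J. J \<noteq> {} \<and> J \<noteq> UNIV}. \<exists>i\<in>-J. c * t < f (uvec u J) $ i)"
      using eventually_happens'[OF trivial_limit_at_top_linorder] by blast
    then show ?thesis by blast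
  qed
  then obtain U where U_ge: "\<And>t. t \<le> U t"
    and U_step: "\<And>t J. J \<noteq> {} \<Longrightarrow> J \<noteq> UNIV \<Longrightarrow> \<exists>i\<in>-J. c * t < f (uvec (U t) J) $ i"
    by metis
  define T where "T k = (U ^^ k) 1" for k
  have T_Suc: "T (Suc k) = U (T k)" for k by (simp add: T_def)
  have T_mono: "T k \<le> T (Suc k)" for k by (simp add: T_Suc U_ge)
  have T_ge: "1 \<le> T k" for k
  proof (induction k)
    case (Suc k)
    then show ?case using T_mono[of k] by linarith
  qed (simp add: T_def)
  show ?thesis
  proof (intro exI ballI allI)
    fix x i assume "x \<in> super_eigenspace f c"
    then show "x $ i \<le> T CARD('n) * (MIN k. x $ k)"
      using super_eigenvector_spread[where T = T, OF hom mon \<open>0 \<le> c\<close> _ T_ge T_mono] U_step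
      by (simp add: T_Suc)
  qed
qed

theorem theorem5:
  fixes f :: "real^'n \<Rightarrow> real^'n"
  assumes "\<forall>x. pos_vec x \<longrightarrow> pos_vec (f x)"
    and "homogeneous_map f"
    and "monotone_pos_map f"
  shows "(\<forall>c>0. hilbert_bounded (super_eigenspace f c)) \<longleftrightarrow> indecomposable f"
proof
  assume "\<forall>c>0. hilbert_bounded (super_eigenspace f c)"
  then show "indecomposable f"
    using decomposable_super_eigenspace_unbounded[OF assms(2,3)]
    unfolding indecomposable_def by blast
next
  assume ind: "indecomposable f"
  show "\<forall>c>0. hilbert_bounded (super_eigenspace f c)"
  proof (intro allI impI)
    fix c :: real assume "c > 0"
    then obtain T where spread: "\<forall>x\<in>super_eigenspace f c. \<forall>i. x $ i \<le> T * (MIN k. x $ k)"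
      using indecomposable_super_eigenspace_spread[OF assms(2,3) ind less_imp_le] by blast
    show "hilbert_bounded (super_eigenspace f c)"
      unfolding hilbert_bounded_def
      using spread by (intro exI[of _ "2 * ln T"] ballI hilbert_dist_le_spread)
         (auto simp: super_eigenspace_def)
  qed
qed

end
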